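(* Fix $r\ge1$. For $n\ge0$ let $$P^{(r)}_n(z_1,\dots,z_r)=\sum_{\pi} z_1^{a_1(\pi)}z_2^{a_2(\pi)}\cdots z_r^{a_r(\pi)},$$ the sum over all multiset set-partitions $\pi$ of the multiset $\{1^r,2^r,\dots,n^r\}$ (each of $1,\dots,n$ appearing exactly $r$ times); in particular $P^{(r)}_0=1$. Then for all $n\ge1$, $$P^{(r)}_n(z_1,\dots,z_r)=\mathcal{D}_r\,P^{(r)}_{n-1}(z_1,\dots,z_r),$$ where $\mathcal{D}_r$ is the operator defined in the context. Consequently the number of multiset set-partitions of $\{1^r,\dots,n^r\}$ equals $P^{(r)}_n(1,1,\dots,1)$.
   Context: A multiset set-partition of a finite multiset $M$ is a finite multiset of nonempty sets (ordinary sets, no repeated elements inside a set) whose multiset union equals $M$; the same set may occur several times in the partition, and the partition is unordered. For a multiset set-partition $\pi$ and $i\ge1$, $a_i(\pi)$ denotes the number of distinct sets that occur in $\pi$ exactly $i$ times. Definition of $\mathcal{D}_r$: Put $z_0:=1$ and $D_i:=\partial/\partial z_i$. A scenario is a tuple $T=[c_0,\lambda_1,\dots,\lambda_r]$ where $c_0\ge0$ is an integer and, for each $i$, $\lambda_i$ is an integer partition (possibly empty) all of whose parts are at most $i$, such that $c_0+|\lambda_1|+\cdots+|\lambda_r|=r$ ($|\lambda|$ = sum of parts). Write $m_j(\lambda_i)$ for the number of parts of $\lambda_i$ equal to $j$ and $\ell(\lambda_i)=\sum_j m_j(\lambda_i)$ for its number of parts. To $T$ associate the operator $$\mathcal{P}[T]\,f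 = z_{c_0}\prod_{i=1}^{r}\prod_{j=1}^{i}\frac{(z_j z_{i-j})^{m_j(\lambda_i)}}{m_j(\lambda_i)!}\;\cdot\;\Big(\prod_{i=1}^{r}D_i^{\ell(\lambda_i)}\Big)f ,$$ i.e. all differentiations are applied first and the result is then multiplied by the monomial coefficient (normal ordering). Then $\mathcal{D}_r:=\sum_{T}\mathcal{P}[T]$, the sum over all scenarios $T$. (For example $\mathcal{D}_1 = z_1 + z_1 D_1$, and $\mathcal{D}_2= z_2D_2+\tfrac12 z_1^4D_2^2+z_1^3D_1D_2+\tfrac12 z_1^2D_1^2+z_1^3D_2+z_1^2D_1+z_2$.) *)

theory Defs
  imports "HOL-Analysis.Analysis" "HOL-Library.Multiset"
begin

definition rep_mset :: "nat \<Rightarrow> nat \<Rightarrow> nat multiset" where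
  "rep_mset r n = (\<Sum>k\<in>{1..n}. replicate_mset r k)"

definition msp :: "nat multiset \<Rightarrow> nat set multiset set" where
  "msp M = {\<pi>. (\<forall>S\<in>#\<pi>. S \<noteq> {} \<and> finite S) \<and> (\<Sum>S\<in>#\<pi>. mset_set S) = M}"

definition a_cnt :: "nat \<Rightarrow> nat set multiset \<Rightarrow> nat" where
  "a_cnt i \<pi> = card {S \<in> set_mset \<pi>. count \<pi> S = i}"

definition P :: "nat \<Rightarrow> nat \<Rightarrow> (nat \<Rightarrow> real) \<Rightarrow> real" where
  "P r n z = (\<Sum>\<pi>\<in>msp (rep_mset r n). \<Prod>i\<in>{1..r}. z i ^ a_cnt i \<pi>)"

definition pd :: "nat \<Rightarrow> ((nat \<Rightarrow> real) \<Rightarrow> real) \<Rightarrow> (nat \<Rightarrow> real) \<Rightarrow> real" where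
  "pd i f z = deriv (\<lambda>t. f (z(i := t))) (z i)"

text \<open>Scenarios T = [c0, lambda_1, ..., lambda_r]; partitions lambda_i are multisets of
  positive parts at most i; lambda_i is empty for i outside 1..r.\<close>
definition scenarios :: "nat \<Rightarrow> (nat \<times> (nat \<Rightarrow> nat multiset)) set" where
  "scenarios r = {(c, l). (\<forall>i. set_mset (l i) \<subseteq> {1..i}) \<and> (\<forall>i. i \<notin> {1..r} \<longrightarrow> l i = {#})
                         \<and> c + (\<Sum>i=1..r. sum_mset (l i)) = r}"

definition Dall :: "nat \<Rightarrow> (nat \<Rightarrow> nat multiset) \<Rightarrow> ((nat \<Rightarrow> real) \<Rightarrow> real) \<Rightarrow> (nat \<Rightarrow> real) \<Rightarrow> real" where
  "Dall r l f = foldr (\<lambda>i g. (pd i ^^ size (l i)) g) [1..<r+1] f"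

text \<open>The operator P[T] (normal ordered), with z_0 := 1.\<close>
definition PT :: "nat \<Rightarrow> nat \<times> (nat \<Rightarrow> nat multiset) \<Rightarrow> ((nat \<Rightarrow> real) \<Rightarrow> real) \<Rightarrow> (nat \<Rightarrow> real) \<Rightarrow> real" where
  "PT r T f z = (let c = fst T; l = snd T; zz = z(0 := 1) in
     zz c * (\<Prod>i\<in>{1..r}. \<Prod>j\<in>{1..i}.
        (zz j * zz (i - j)) ^ count (l i) j / fact (count (l i) j))
     * Dall r l f z)"

definition Dop :: "nat \<Rightarrow> ((nat \<Rightarrow> real) \<Rightarrow> real) \<Rightarrow> (nat \<Rightarrow> real) \<Rightarrow> real" where
  "Dop r f z = (\<Sum>T\<in>scenarios r. PT r T f z)"

end

theory Submission
  imports Defs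
begin

(*
  Analytic side: P_(n-1) is a sum of monomials z^a(pi), and D_i^k z_i^a = (a)_k z_i^(a-k) with
  the falling factorial (a)_k; hence P[T] P_(n-1) is again an explicit sum over the partitions
  pi of {1^r,...,(n-1)^r}, each term a monomial coefficient times falling factorials.

  Combinatorial side: every partition of {1^r,...,n^r} arises exactly once from a partition pi
  of {1^r,...,(n-1)^r} by choosing a sub-multiset mu of pi with at most r blocks, adding n to
  the chosen blocks, and adding r - |mu| singleton blocks {n}.  Recording the choice by the
  function g = multiplicity in mu, the weight of the new partition depends only on the
  scenario of g: c0 = r - (sum of g) and, for each i, the partition lambda_i formed by the
  nonzero values of g on the distinct blocks of multiplicity i.  Finally the number of g with
  a given scenario is  prod_i (a_i)_(l(lambda_i)) / prod_j m_j(lambda_i)!, which matches the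
  analytic side term by term.
*)

section \<open>Falling factorials and derivatives of monomial sums\<close>

text \<open>The falling factorial (a)_m = a (a-1) ... (a-m+1); it vanishes when m > a.\<close>
definition falling :: "nat \<Rightarrow> nat \<Rightarrow> real" where
  "falling a m = (\<Prod>t<m. real (a - t))"

lemma falling_Suc_Suc: "falling (Suc a) (Suc s) = falling a (Suc s) + real (Suc s) * falling a s"
proof -
  have shift: "falling (Suc a) (Suc s) = real (Suc a) * falling a s"
    unfolding falling_def by (simp add: prod.lessThan_Suc_shift del: prod.lessThan_Suc)
  have last: "falling a (Suc s) = falling a s * real (a - s)"
    unfolding falling_def by simp
  show ?thesis
  proof (cases "s \<le> a")
    case True
    then show ?thesis unfolding shift last by (simp add: algebra_simps of_nat_diff)
  next
    case False
    then have "falling a s = 0" unfolding falling_def by (intro prod_zero) (auto intro!: bexI[of _ a])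
    then show ?thesis unfolding shift last by simp
  qed
qed

definition poly_sum :: "'x set \<Rightarrow> ('x \<Rightarrow> real) \<Rightarrow> ('x \<Rightarrow> nat \<Rightarrow> nat) \<Rightarrow> nat set \<Rightarrow> (nat \<Rightarrow> real) \<Rightarrow> real" where
  "poly_sum A w e K z = (\<Sum>x\<in>A. w x * (\<Prod>k\<in>K. z k ^ e x k))"

lemma pd_poly_sum:
  assumes "finite K" "i \<in> K"
  shows "pd i (poly_sum A w e K) = poly_sum A (\<lambda>x. w x * real (e x i)) (\<lambda>x. (e x)(i := e x i - 1)) K"
proof (rule ext)
  fix z :: "nat \<Rightarrow> real"
  have split: "(\<Prod>k\<in>K. (z(i := t)) k ^ u k) = t ^ u i * (\<Prod>k\<in>K-{i}. z k ^ u k)" for t and u :: "nat \<Rightarrow> nat"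
    using assms by (simp add: prod.remove)
  have "((\<lambda>t. poly_sum A w e K (z(i := t))) has_field_derivative
      (\<Sum>x\<in>A. w x * (real (e x i) * z i ^ (e x i - 1)) * (\<Prod>k\<in>K-{i}. z k ^ e x k))) (at (z i))"
    unfolding poly_sum_def split
    by (auto intro!: derivative_eq_intros sum.cong simp: mult_ac)
  then have "pd i (poly_sum A w e K) z =
      (\<Sum>x\<in>A. w x * (real (e x i) * z i ^ (e x i - 1)) * (\<Prod>k\<in>K-{i}. z k ^ e x k))"
    unfolding pd_def by (simp add: DERIV_imp_deriv)
  also have "\<dots> = poly_sum A (\<lambda>x. w x * real (e x i)) (\<lambda>x. (e x)(i := e x i - 1)) K z"
    unfolding poly_sum_def
    by (intro sum.cong refl) (use assms in \<open>simp add: prod.remove\<close>)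
  finally show "pd i (poly_sum A w e K) z = poly_sum A (\<lambda>x. w x * real (e x i)) (\<lambda>x. (e x)(i := e x i - 1)) K z" .
qed

lemma pd_power_poly_sum:
  assumes "finite K" "i \<in> K"
  shows "(pd i ^^ m) (poly_sum A w e K) =
         poly_sum A (\<lambda>x. w x * falling (e x i) m) (\<lambda>x. (e x)(i := e x i - m)) K"
proof (induction m)
  case 0
  then show ?case by (simp add: falling_def)
next
  case (Suc m)
  have "(pd i ^^ Suc m) (poly_sum A w e K) = pd i ((pd i ^^ m) (poly_sum A w e K))" by simp
  also have "\<dots> = poly_sum A (\<lambda>x. (w x * falling (e x i) m) * real (((e x)(i := e x i - m)) i))
      (\<lambda>x. ((e x)(i := e x i - m))(i := ((e x)(i := e x i - m)) i - 1)) K"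
    unfolding Suc.IH by (rule pd_poly_sum[OF assms])
  also have "\<dots> = poly_sum A (\<lambda>x. w x * falling (e x i) (Suc m)) (\<lambda>x. (e x)(i := e x i - Suc m)) K"
    by (simp add: falling_def mult.assoc)
  finally show ?case .
qed

lemma pd_fold_poly_sum:
  assumes "finite K" "distinct is" "set is \<subseteq> K"
  shows "foldr (\<lambda>i g. (pd i ^^ s i) g) is (poly_sum A w e K) =
     poly_sum A (\<lambda>x. w x * (\<Prod>i\<in>set is. falling (e x i) (s i)))
                (\<lambda>x k. e x k - (if k \<in> set is then s k else 0)) K"
  using assms(2,3)
proof (induction "is")
  case Nil
  then show ?case by simp
next
  case (Cons i "is")
  then have IH: "foldr (\<lambda>i g. (pd i ^^ s i) g) is (poly_sum A w e K) =
     poly_sum A (\<lambda>x. w x * (\<Prod>i\<in>set is. falling (e x i) (s i)))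
                (\<lambda>x k. e x k - (if k \<in> set is then s k else 0)) K"
    and iK: "i \<in> K" and inot: "i \<notin> set is" by auto
  show ?case
    unfolding foldr.simps o_apply IH pd_power_poly_sum[OF assms(1) iK]
    using inot by (intro arg_cong2[where f="\<lambda>a b. poly_sum A a b K"]) (auto simp: fun_eq_iff mult_ac)
qed

definition weight :: "nat \<Rightarrow> (nat \<Rightarrow> real) \<Rightarrow> nat set multiset \<Rightarrow> real" where
  "weight r z \<pi> = (\<Prod>i\<in>{1..r}. z i ^ a_cnt i \<pi>)"

lemma P_weight: "P r n z = (\<Sum>\<pi>\<in>msp (rep_mset r n). weight r z \<pi>)"
  unfolding P_def weight_def ..

lemma Dall_P:
  "Dall r l (P r m) z = (\<Sum>\<pi>\<in>msp (rep_mset r m).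
     (\<Prod>i\<in>{1..r}. falling (a_cnt i \<pi>) (size (l i))) * (\<Prod>k\<in>{1..r}. z k ^ (a_cnt k \<pi> - size (l k))))"
proof -
  have P_poly: "P r m = poly_sum (msp (rep_mset r m)) (\<lambda>_. 1) (\<lambda>\<pi> k. a_cnt k \<pi>) {1..r}"
    unfolding P_def poly_sum_def by (simp add: fun_eq_iff)
  have indices: "set [1..<r+1] = {1..r}" by auto
  show ?thesis
    unfolding Dall_def P_poly pd_fold_poly_sum[OF finite_atLeastAtMost distinct_upt equalityD1[OF indices]]
    unfolding poly_sum_def indices by (auto intro!: sum.cong prod.cong)
qed

lemma finite_msets_bounded:
  assumes "finite A" shows "finite {M. set_mset M \<subseteq> A \<and> size M \<le> k}"
proof -
  have "{M. set_mset M \<subseteq> A \<and> size M \<le> k} \<subseteq> mset ` {xs. set xs \<subseteq> A \<and> length xs \<le> k}"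
  proof
    fix M assume "M \<in> {M. set_mset M \<subseteq> A \<and> size M \<le> k}"
    moreover obtain xs where "mset xs = M" using ex_mset by blast
    ultimately show "M \<in> mset ` {xs. set xs \<subseteq> A \<and> length xs \<le> k}" by auto
  qed
  then show ?thesis using finite_lists_length_le[OF assms] finite_subset by blast
qed

lemma count_mset_sum_image: "count (\<Sum>X\<in>#\<pi>. f X) x = (\<Sum>X\<in>#\<pi>. count (f X) x)"
  by (induction \<pi>) auto

lemma count_Union_mset_set:
  "(\<forall>X\<in>#\<pi>. finite X) \<Longrightarrow> count (\<Sum>X\<in>#\<pi>. mset_set X) x = size (filter_mset (\<lambda>X. x \<in> X) \<pi>)"
  by (induction \<pi>) auto

lemma image_mset_fixpoint: "(\<And>x. x \<in># M \<Longrightarrow> f x = x) \<Longrightarrow> image_mset f M = M"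
  by (induction M) auto

lemma filter_mset_all: "(\<forall>x\<in>#M. Q x) \<Longrightarrow> filter_mset Q M = M"
  by (simp add: filter_mset_eq_conv)

lemma filter_mset_none: "(\<forall>x\<in>#M. \<not> Q x) \<Longrightarrow> filter_mset Q M = {#}"
  by (simp add: filter_mset_eq_conv)

lemma sum_replicate_singleton: "sum_mset (replicate_mset k {#n#}) = replicate_mset k n"
  by (induction k) auto

lemma size_le_sum_mset: "0 \<notin># M \<Longrightarrow> size M \<le> sum_mset (M :: nat multiset)"
  by (induction M) auto

lemma count_rep_mset: "count (rep_mset r m) x = (if 1 \<le> x \<and> x \<le> m then r else 0)"
  unfolding rep_mset_def count_sum by (simp add: count_replicate_mset)

lemma rep_mset_Suc: "rep_mset r (Suc m) = rep_mset r m + replicate_mset r (Suc m)"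
  unfolding rep_mset_def by (simp add: add.commute)

lemma msp_block: "\<pi> \<in> msp M \<Longrightarrow> S \<in># \<pi> \<Longrightarrow> S \<noteq> {} \<and> finite S"
  unfolding msp_def by auto

lemma msp_block_subset:
  assumes "\<pi> \<in> msp M" "S \<in># \<pi>" shows "S \<subseteq> set_mset M"
proof -
  obtain \<rho> where \<rho>: "\<pi> = add_mset S \<rho>" using assms(2) by (metis multi_member_split)
  have "M = mset_set S + (\<Sum>X\<in>#\<rho>. mset_set X)" using assms(1) unfolding msp_def \<rho> by simp
  then show ?thesis using msp_block[OF assms] by auto
qed

lemma size_le_size_Union:
  "(\<forall>S\<in>#\<pi>. S \<noteq> {} \<and> finite S) \<Longrightarrow> size \<pi> \<le> size (\<Sum>S\<in>#\<pi>. mset_set S)"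
proof (induction \<pi>)
  case (add S \<pi>)
  then have "card S \<ge> 1" by (simp add: Suc_leI card_gt_0_iff)
  with add show ?case by simp
qed simp

text \<open>Blocks are subsets of the support and there are at most |M| of them, so msp M is finite.\<close>
lemma finite_msp: "finite (msp M)"
proof -
  have "msp M \<subseteq> {\<pi>. set_mset \<pi> \<subseteq> Pow (set_mset M) \<and> size \<pi> \<le> size M}"
  proof
    fix \<pi> assume \<pi>: "\<pi> \<in> msp M"
    then have "size \<pi> \<le> size M" using size_le_size_Union unfolding msp_def by auto
    then show "\<pi> \<in> {\<pi>. set_mset \<pi> \<subseteq> Pow (set_mset M) \<and> size \<pi> \<le> size M}"
      using msp_block_subset[OF \<pi>] by auto
  qed
  then show ?thesis using finite_msets_bounded[of "Pow (set_mset M)"] finite_subset by blast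
qed

text \<open>A block occurs at most r times in a partition of {1^r,...,m^r}: each of its elements
  is covered by every copy of it.\<close>
lemma msp_count_le:
  assumes "\<pi> \<in> msp (rep_mset r m)" "S \<in># \<pi>"
  shows "count \<pi> S \<le> r"
proof -
  obtain x where x: "x \<in> S" using msp_block[OF assms] by auto
  have "count \<pi> S * count (mset_set S) x = (\<Sum>X\<in>#filter_mset (\<lambda>Y. Y = S) \<pi>. count (mset_set X) x)"
    unfolding filter_eq_replicate_mset by simp
  also have "\<dots> \<le> (\<Sum>X\<in>#\<pi>. count (mset_set X) x)"
  proof -
    have "\<pi> = filter_mset (\<lambda>Y. Y = S) \<pi> + filter_mset (\<lambda>Y. Y \<noteq> S) \<pi>"
      by (rule multiset_partition)
    then show ?thesis by (metis image_mset_union sum_mset.union le_add1)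
  qed
  also have "\<dots> = count (\<Sum>X\<in>#\<pi>. mset_set X) x" by (rule count_mset_sum_image[symmetric])
  also have "\<dots> = count (rep_mset r m) x" using assms(1) unfolding msp_def by simp
  also have "\<dots> \<le> r" by (simp add: count_rep_mset)
  finally show ?thesis using x msp_block[OF assms] by simp
qed

lemma msp_count_range: "\<pi> \<in> msp (rep_mset r m) \<Longrightarrow> S \<in># \<pi> \<Longrightarrow> count \<pi> S \<in> {1..r}"
  using msp_count_le by (auto simp: Suc_le_eq)

lemma msp_new_notin:
  assumes "\<pi> \<in> msp (rep_mset r m)" "S \<in># \<pi>" shows "Suc m \<notin> S"
  using msp_block_subset[OF assms] by (auto simp: count_rep_mset set_mset_def)

section \<open>Building partitions of {1^r,...,(m+1)^r} from partitions of {1^r,...,m^r}\<close>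

definition extend :: "nat \<Rightarrow> nat \<Rightarrow> nat set multiset \<Rightarrow> nat set multiset \<Rightarrow> nat set multiset" where
  "extend n r \<pi> \<mu> = (\<pi> - \<mu>) + image_mset (insert n) \<mu> + replicate_mset (r - size \<mu>) {n}"

definition choices :: "nat \<Rightarrow> nat set multiset \<Rightarrow> nat set multiset set" where
  "choices r \<pi> = {\<mu>. \<mu> \<subseteq># \<pi> \<and> size \<mu> \<le> r}"

lemma finite_choices: "finite (choices r \<pi>)"
proof -
  have "choices r \<pi> \<subseteq> {M. set_mset M \<subseteq> set_mset \<pi> \<and> size M \<le> size \<pi>}"
    unfolding choices_def by (auto dest: mset_subset_eqD size_mset_mono)
  then show ?thesis using finite_msets_bounded[of "set_mset \<pi>" "size \<pi>"] finite_subset by blast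
qed

lemma sum_mset_set_insert_new:
  assumes "\<forall>X\<in>#\<mu>. finite X \<and> n \<notin> X"
  shows "(\<Sum>X\<in>#image_mset (insert n) \<mu>. mset_set X) = (\<Sum>X\<in>#\<mu>. mset_set X) + replicate_mset (size \<mu>) n"
  using assms by (induction \<mu>) (auto simp: add_ac)

lemma extend_in_msp:
  assumes \<pi>: "\<pi> \<in> msp (rep_mset r m)" and \<mu>: "\<mu> \<in> choices r \<pi>"
  shows "extend (Suc m) r \<pi> \<mu> \<in> msp (rep_mset r (Suc m))"
proof -
  let ?n = "Suc m"
  have sub: "\<mu> \<subseteq># \<pi>" and sz: "size \<mu> \<le> r" using \<mu> unfolding choices_def by auto
  have in_\<pi>: "S \<in># \<pi>" if "S \<in># \<mu>" for S using that sub by (auto dest: mset_subset_eqD)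
  have split_\<pi>: "(\<Sum>X\<in>#\<pi> - \<mu>. mset_set X) + (\<Sum>X\<in>#\<mu>. mset_set X) = (\<Sum>X\<in>#\<pi>. mset_set X)"
    by (metis image_mset_union sub subset_mset.diff_add sum_mset.union)
  have "(\<Sum>X\<in>#image_mset (insert ?n) \<mu>. mset_set X) = (\<Sum>X\<in>#\<mu>. mset_set X) + replicate_mset (size \<mu>) ?n"
    by (rule sum_mset_set_insert_new) (use in_\<pi> msp_new_notin[OF \<pi>] msp_block[OF \<pi>] in blast)
  then have "(\<Sum>X\<in>#extend ?n r \<pi> \<mu>. mset_set X) = (\<Sum>X\<in>#\<pi>. mset_set X) + replicate_mset r ?n"
    unfolding extend_def image_mset_union sum_mset.union
    using sz by (simp add: split_\<pi>[symmetric] sum_replicate_singleton add_ac multiset_eq_iff)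
  also have "\<dots> = rep_mset r ?n" using \<pi> unfolding msp_def rep_mset_Suc by simp
  finally show ?thesis
    unfolding msp_def extend_def using msp_block[OF \<pi>] in_\<pi> by (auto dest: in_diffD)
qed

text \<open>The inverse construction: remove n from every block (dropping the singletons {n}),
  and record which blocks contained n.\<close>
definition remove_new :: "nat \<Rightarrow> nat set multiset \<Rightarrow> nat set multiset" where
  "remove_new n \<pi>' = image_mset (\<lambda>X. X - {n}) (filter_mset (\<lambda>X. X \<noteq> {n}) \<pi>')"

definition chosen :: "nat \<Rightarrow> nat set multiset \<Rightarrow> nat set multiset" where
  "chosen n \<pi>' = image_mset (\<lambda>X. X - {n}) (filter_mset (\<lambda>X. n \<in> X \<and> X \<noteq> {n}) \<pi>')"

lemma remove_new_extend:
  assumes \<pi>: "\<pi> \<in> msp (rep_mset r m)" and \<mu>: "\<mu> \<in> choices r \<pi>"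
  shows "remove_new (Suc m) (extend (Suc m) r \<pi> \<mu>) = \<pi>"
    and "chosen (Suc m) (extend (Suc m) r \<pi> \<mu>) = \<mu>"
proof -
  let ?n = "Suc m"
  have sub: "\<mu> \<subseteq># \<pi>" using \<mu> unfolding choices_def by auto
  have in_\<mu>: "S \<in># \<pi> \<and> S \<noteq> {} \<and> ?n \<notin> S" if "S \<in># \<mu>" for S
    using that sub msp_block[OF \<pi>] msp_new_notin[OF \<pi>] by (auto dest: mset_subset_eqD)
  have in_rest: "S \<noteq> {} \<and> ?n \<notin> S" if "S \<in># \<pi> - \<mu>" for S
    using that msp_block[OF \<pi>] msp_new_notin[OF \<pi>] by (auto dest: in_diffD)
  have drop_n: "image_mset (\<lambda>X. X - {?n}) (\<pi> - \<mu>) = \<pi> - \<mu>"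
    "image_mset (\<lambda>X. X - {?n}) (image_mset (insert ?n) \<mu>) = \<mu>"
    unfolding multiset.map_comp o_def using in_rest in_\<mu> by (auto intro!: image_mset_fixpoint)
  have rest_kept: "filter_mset (\<lambda>X. X \<noteq> {?n}) (\<pi> - \<mu>) = \<pi> - \<mu>"
    by (rule filter_mset_all) (use in_rest in blast)
  have rest_without_n: "filter_mset (\<lambda>X. ?n \<in> X \<and> X \<noteq> {?n}) (\<pi> - \<mu>) = {#}"
    by (rule filter_mset_none) (use in_rest in blast)
  have enlarged_kept: "filter_mset (\<lambda>X. X \<noteq> {?n}) (image_mset (insert ?n) \<mu>) = image_mset (insert ?n) \<mu>"
    by (rule filter_mset_all) (use in_\<mu> in auto)
  have enlarged_with_n: "filter_mset (\<lambda>X. ?n \<in> X \<and> X \<noteq> {?n}) (image_mset (insert ?n) \<mu>) =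
      image_mset (insert ?n) \<mu>"
    by (rule filter_mset_all) (use in_\<mu> in auto)
  have singletons_dropped: "filter_mset (\<lambda>X. X \<noteq> {?n}) (replicate_mset k {?n}) = {#}"
    "filter_mset (\<lambda>X. ?n \<in> X \<and> X \<noteq> {?n}) (replicate_mset k {?n}) = {#}" for k
    by (auto intro: filter_mset_none)
  show "remove_new ?n (extend ?n r \<pi> \<mu>) = \<pi>" "chosen ?n (extend ?n r \<pi> \<mu>) = \<mu>"
    unfolding remove_new_def chosen_def extend_def filter_union_mset image_mset_union rest_kept rest_without_n enlarged_kept
      enlarged_with_n singletons_dropped drop_n
    using sub by simp_all
qed

lemma split_by_new:
  "\<pi>' = filter_mset (\<lambda>X. n \<notin> X) \<pi>' + image_mset (insert n) (chosen n \<pi>') + replicate_mset (count \<pi>' {n}) {n}"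
proof -
  have "image_mset (insert n) (chosen n \<pi>') = filter_mset (\<lambda>X. n \<in> X \<and> X \<noteq> {n}) \<pi>'"
    unfolding chosen_def multiset.map_comp o_def by (rule image_mset_fixpoint) auto
  moreover have "filter_mset (\<lambda>X. X = {n}) \<pi>' = replicate_mset (count \<pi>' {n}) {n}"
    by (simp add: filter_eq_replicate_mset)
  moreover have "\<pi>' = filter_mset (\<lambda>X. n \<notin> X) \<pi>' + filter_mset (\<lambda>X. n \<in> X \<and> X \<noteq> {n}) \<pi>' +
      filter_mset (\<lambda>X. X = {n}) \<pi>'"
    by (auto simp: multiset_eq_iff)
  ultimately show ?thesis by simp
qed

lemma remove_new_eq: "remove_new n \<pi>' = filter_mset (\<lambda>X. n \<notin> X) \<pi>' + chosen n \<pi>'"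
proof -
  have "filter_mset (\<lambda>X. X \<noteq> {n}) \<pi>' = filter_mset (\<lambda>X. n \<notin> X) \<pi>' + filter_mset (\<lambda>X. n \<in> X \<and> X \<noteq> {n}) \<pi>'"
    by (auto simp: multiset_eq_iff)
  moreover have "image_mset (\<lambda>X. X - {n}) (filter_mset (\<lambda>X. n \<notin> X) \<pi>') = filter_mset (\<lambda>X. n \<notin> X) \<pi>'"
    by (rule image_mset_fixpoint) auto
  ultimately show ?thesis unfolding remove_new_def chosen_def by simp
qed

lemma size_chosen_plus_singletons:
  assumes \<pi>': "\<pi>' \<in> msp (rep_mset r (Suc m))"
  shows "size (chosen (Suc m) \<pi>') + count \<pi>' {Suc m} = r"
proof -
  let ?n = "Suc m"
  have "r = count (\<Sum>X\<in>#\<pi>'. mset_set X) ?n"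
    using \<pi>' unfolding msp_def by (simp add: count_rep_mset)
  also have "\<dots> = size (filter_mset (\<lambda>X. ?n \<in> X) \<pi>')"
    by (rule count_Union_mset_set) (use msp_block[OF \<pi>'] in blast)
  also have "\<dots> = size (chosen ?n \<pi>') + count \<pi>' {?n}"
    by (subst (1) split_by_new[of _ ?n]) (auto simp: filter_mset_none filter_mset_all)
  finally show ?thesis by simp
qed

lemma extend_remove_new:
  assumes \<pi>': "\<pi>' \<in> msp (rep_mset r (Suc m))"
  defines "\<pi> \<equiv> remove_new (Suc m) \<pi>'" and "\<mu> \<equiv> chosen (Suc m) \<pi>'"
  shows "\<pi> \<in> msp (rep_mset r m) \<and> \<mu> \<in> choices r \<pi> \<and> extend (Suc m) r \<pi> \<mu> = \<pi>'"
proof -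
  let ?n = "Suc m" and ?A = "filter_mset (\<lambda>X. Suc m \<notin> X) \<pi>'"
  have block: "X \<noteq> {} \<and> finite X" if "X \<in># \<pi>'" for X using msp_block[OF \<pi>' that] .
  have size_\<mu>: "size \<mu> + count \<pi>' {?n} = r" unfolding \<mu>_def by (rule size_chosen_plus_singletons[OF \<pi>'])
  have \<pi>_eq: "\<pi> = ?A + \<mu>" unfolding \<pi>_def \<mu>_def by (rule remove_new_eq)
  have in_\<mu>: "X \<noteq> {} \<and> finite X \<and> ?n \<notin> X" if "X \<in># \<mu>" for X
    using that block unfolding \<mu>_def chosen_def by auto
  have "rep_mset r m + replicate_mset r ?n = (\<Sum>X\<in>#\<pi>'. mset_set X)"
    using \<pi>' unfolding msp_def rep_mset_Suc by simp
  also have "\<dots> = (\<Sum>X\<in>#\<pi>. mset_set X) + replicate_mset r ?n"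
    using sum_mset_set_insert_new[of \<mu> ?n] in_\<mu> size_\<mu>[symmetric]
    by (subst split_by_new[of _ ?n]) (simp add: \<pi>_eq \<mu>_def sum_replicate_singleton multiset_eq_iff)
  finally have "(\<Sum>X\<in>#\<pi>. mset_set X) = rep_mset r m" by simp
  moreover have "X \<noteq> {} \<and> finite X" if "X \<in># \<pi>" for X
    using that in_\<mu> block unfolding \<pi>_eq by auto
  ultimately have "\<pi> \<in> msp (rep_mset r m)" unfolding msp_def by blast
  moreover have "\<mu> \<in> choices r \<pi>" unfolding choices_def \<pi>_eq using size_\<mu> by simp
  moreover have "extend ?n r \<pi> \<mu> = \<pi>'"
  proof -
    have "extend ?n r \<pi> \<mu> = ?A + image_mset (insert ?n) \<mu> + replicate_mset (count \<pi>' {?n}) {?n}"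
      unfolding extend_def \<pi>_eq by (simp flip: size_\<mu>)
    then show ?thesis unfolding \<mu>_def using split_by_new[of \<pi>' ?n] by simp
  qed
  ultimately show ?thesis by blast
qed

lemma msp_Suc_eq_image:
  "msp (rep_mset r (Suc m)) = (\<lambda>(\<pi>, \<mu>). extend (Suc m) r \<pi> \<mu>) ` Sigma (msp (rep_mset r m)) (choices r)"
  using extend_remove_new by (force intro: extend_in_msp)

lemma inj_extend:
  "inj_on (\<lambda>(\<pi>, \<mu>). extend (Suc m) r \<pi> \<mu>) (Sigma (msp (rep_mset r m)) (choices r))"
proof (rule inj_onI, clarify)
  fix \<pi>1 \<mu>1 \<pi>2 \<mu>2
  assume "\<pi>1 \<in> msp (rep_mset r m)" "\<mu>1 \<in> choices r \<pi>1" "\<pi>2 \<in> msp (rep_mset r m)" "\<mu>2 \<in> choices r \<pi>2"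
    and "extend (Suc m) r \<pi>1 \<mu>1 = extend (Suc m) r \<pi>2 \<mu>2"
  then show "\<pi>1 = \<pi>2 \<and> \<mu>1 = \<mu>2" by (metis remove_new_extend)
qed

lemma sum_msp_Suc:
  "(\<Sum>\<pi>'\<in>msp (rep_mset r (Suc m)). f \<pi>') =
   (\<Sum>\<pi>\<in>msp (rep_mset r m). \<Sum>\<mu>\<in>choices r \<pi>. f (extend (Suc m) r \<pi> \<mu>))"
  unfolding msp_Suc_eq_image sum.reindex[OF inj_extend]
  by (simp add: sum.Sigma finite_msp finite_choices split_def)

section \<open>The weight of an extension\<close>

lemma prod_group_power:
  assumes "finite X" "finite J" "h ` X \<subseteq> J"
  shows "(\<Prod>x\<in>X. f (h x)) = (\<Prod>j\<in>J. f j ^ card {x\<in>X. h x = j})"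
proof -
  have "(\<Prod>x\<in>X. f (h x)) = (\<Prod>j\<in>J. \<Prod>x\<in>{x\<in>X. h x = j}. f (h x))"
    by (rule prod.group[symmetric, OF assms])
  also have "\<dots> = (\<Prod>j\<in>J. f j ^ card {x\<in>X. h x = j})"
    by (intro prod.cong refl) simp
  finally show ?thesis .
qed

lemma weight_as_prod:
  fixes z :: "nat \<Rightarrow> real"
  assumes "\<And>S. S \<in># \<pi> \<Longrightarrow> count \<pi> S \<le> r" "finite Y" "set_mset \<pi> \<subseteq> Y"
  shows "weight r z \<pi> = (\<Prod>X\<in>Y. (z(0 := 1)) (count \<pi> X))"
proof -
  have "(\<Prod>X\<in>set_mset \<pi>. (z(0 := 1)) (count \<pi> X)) =
        (\<Prod>i\<in>{1..r}. (z(0 := 1)) i ^ card {X\<in>set_mset \<pi>. count \<pi> X = i})"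
    by (rule prod_group_power) (use assms(1) in \<open>auto simp: Suc_le_eq\<close>)
  also have "\<dots> = weight r z \<pi>"
    unfolding weight_def a_cnt_def by (intro prod.cong refl) auto
  finally have "weight r z \<pi> = (\<Prod>X\<in>set_mset \<pi>. (z(0 := 1)) (count \<pi> X))" by simp
  also have "\<dots> = (\<Prod>X\<in>Y. (z(0 := 1)) (count \<pi> X))"
    by (rule prod.mono_neutral_left) (use assms in \<open>auto simp: not_in_iff\<close>)
  finally show ?thesis .
qed

lemma count_extend:
  assumes \<pi>: "\<pi> \<in> msp (rep_mset r m)" and \<mu>: "\<mu> \<in> choices r \<pi>" and S: "S \<in># \<pi>"
  shows "count (extend (Suc m) r \<pi> \<mu>) S = count \<pi> S - count \<mu> S"
    and "count (extend (Suc m) r \<pi> \<mu>) (insert (Suc m) S) = count \<mu> S"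
proof -
  let ?n = "Suc m"
  have new: "?n \<notin> T \<and> T \<noteq> {}" if "T \<in># \<pi>" for T using msp_new_notin[OF \<pi> that] msp_block[OF \<pi> that] by blast
  have in_\<pi>: "T \<in># \<pi>" if "T \<in># \<mu>" for T using that \<mu> unfolding choices_def by (auto dest: mset_subset_eqD)
  have "S \<notin># image_mset (insert ?n) \<mu>" "S \<noteq> {?n}" using new[OF S] by auto
  then show "count (extend ?n r \<pi> \<mu>) S = count \<pi> S - count \<mu> S"
    unfolding extend_def by (simp only: not_in_iff count_union count_diff count_replicate_mset) simp
  have "insert ?n S \<notin># \<pi>" "insert ?n S \<noteq> {?n}" using new S by blast+
  moreover have "count (image_mset (insert ?n) \<mu>) (insert ?n S) = count \<mu> S"
  proof -
    have "{T. T \<in># \<mu> \<and> insert ?n S = insert ?n T} = (if S \<in># \<mu> then {S} else {})"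
    proof -
      have "T = S" if "T \<in># \<mu>" "insert ?n S = insert ?n T" for T
        by (metis Diff_insert_absorb new in_\<pi> S that)
      then show ?thesis by auto
    qed
    then show ?thesis
      unfolding count_image_mset' by (simp add: not_in_iff)
  qed
  ultimately show "count (extend ?n r \<pi> \<mu>) (insert ?n S) = count \<mu> S"
    unfolding extend_def by (simp add: not_in_iff)
qed

lemma count_extend_singleton:
  assumes \<pi>: "\<pi> \<in> msp (rep_mset r m)" and \<mu>: "\<mu> \<in> choices r \<pi>"
  shows "count (extend (Suc m) r \<pi> \<mu>) {Suc m} = r - size \<mu>"
proof -
  let ?n = "Suc m"
  have new: "?n \<notin> T \<and> T \<noteq> {}" if "T \<in># \<mu>" for T
    using that \<mu> msp_new_notin[OF \<pi>] msp_block[OF \<pi>] unfolding choices_def by (auto dest: mset_subset_eqD)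
  have "{?n} \<notin># \<pi>" using msp_new_notin[OF \<pi>] by blast
  moreover have "{?n} \<notin># image_mset (insert ?n) \<mu>" using new by fastforce
  ultimately show ?thesis
    unfolding extend_def by (simp only: not_in_iff count_union count_diff count_replicate_mset) simp
qed

text \<open>The weight of the extension by a choice recorded as multiplicities g: a block S of
  multiplicity i contributes z_(i - g S) z_(g S), the singletons contribute z_(r - sum of g).\<close>
definition split_weight :: "nat \<Rightarrow> (nat \<Rightarrow> real) \<Rightarrow> nat set multiset \<Rightarrow> (nat set \<Rightarrow> nat) \<Rightarrow> real" where
  "split_weight r z \<pi> g = (z(0:=1)) (r - (\<Sum>S\<in>set_mset \<pi>. g S)) *
     (\<Prod>S\<in>set_mset \<pi>. (z(0:=1)) (count \<pi> S - g S) * (z(0:=1)) (g S))"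

lemma size_as_sum_count:
  assumes "\<mu> \<subseteq># \<pi>" shows "size \<mu> = (\<Sum>S\<in>set_mset \<pi>. count \<mu> S)"
  unfolding size_multiset_overloaded_eq
  by (rule sum.mono_neutral_left) (use assms in \<open>auto dest: mset_subset_eqD simp: not_in_iff\<close>)

lemma weight_extend:
  fixes z :: "nat \<Rightarrow> real"
  assumes \<pi>: "\<pi> \<in> msp (rep_mset r m)" and \<mu>: "\<mu> \<in> choices r \<pi>"
  shows "weight r z (extend (Suc m) r \<pi> \<mu>) = split_weight r z \<pi> (count \<mu>)"
proof -
  let ?n = "Suc m" and ?\<pi>' = "extend (Suc m) r \<pi> \<mu>" and ?zz = "z(0:=1)"
  define f where "f X = ?zz (count ?\<pi>' X)" for X
  have sub: "\<mu> \<subseteq># \<pi>" using \<mu> unfolding choices_def by auto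
  have new: "?n \<notin> S \<and> S \<noteq> {}" if "S \<in># \<pi>" for S using msp_new_notin[OF \<pi> that] msp_block[OF \<pi> that] by blast
  have disj: "{?n} \<notin> set_mset \<pi> \<union> insert ?n ` set_mset \<pi>" "set_mset \<pi> \<inter> insert ?n ` set_mset \<pi> = {}"
    using new by blast+
  have inj: "inj_on (insert ?n) (set_mset \<pi>)" by (rule inj_onI) (metis Diff_insert_absorb new)
  have "set_mset ?\<pi>' \<subseteq> insert {?n} (set_mset \<pi> \<union> insert ?n ` set_mset \<pi>)"
    unfolding extend_def using mset_subset_eqD[OF sub] by (auto dest: in_diffD)
  then have "weight r z ?\<pi>' = (\<Prod>X\<in>insert {?n} (set_mset \<pi> \<union> insert ?n ` set_mset \<pi>). f X)"
    unfolding f_def by (intro weight_as_prod) (use msp_count_le[OF extend_in_msp[OF \<pi> \<mu>]] in auto)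
  also have "\<dots> = f {?n} * ((\<Prod>S\<in>set_mset \<pi>. f S) * (\<Prod>S\<in>set_mset \<pi>. f (insert ?n S)))"
    using disj inj by (simp add: prod.union_disjoint prod.reindex)
  also have "\<dots> = split_weight r z \<pi> (count \<mu>)"
    unfolding split_weight_def f_def count_extend_singleton[OF \<pi> \<mu>] size_as_sum_count[OF sub]
    by (simp add: count_extend[OF \<pi> \<mu>] prod.distrib mult_ac cong: prod.cong)
  finally show ?thesis .
qed

section \<open>Choices as multiplicity functions, and their scenarios\<close>

text \<open>A choice mu \<subseteq># pi is determined by its multiplicity function on the distinct blocks of pi.\<close>
definition choice_funs :: "nat \<Rightarrow> nat set multiset \<Rightarrow> (nat set \<Rightarrow> nat) set" where
  "choice_funs r \<pi> = {g \<in> PiE (set_mset \<pi>) (\<lambda>S. {0..count \<pi> S}). (\<Sum>S\<in>set_mset \<pi>. g S) \<le> r}"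

lemma finite_choice_funs: "finite (choice_funs r \<pi>)"
  unfolding choice_funs_def
  by (rule finite_subset[of _ "PiE (set_mset \<pi>) (\<lambda>S. {0..count \<pi> S})"]) (auto intro: finite_PiE)

lemma bij_choices_choice_funs:
  "bij_betw (\<lambda>\<mu>. restrict (count \<mu>) (set_mset \<pi>)) (choices r \<pi>) (choice_funs r \<pi>)"
proof (rule bij_betw_byWitness[where f' = "\<lambda>g. \<Sum>S\<in>set_mset \<pi>. replicate_mset (g S) S"])
  have count_witness: "count (\<Sum>S\<in>set_mset \<pi>. replicate_mset (g S) S) X = (if X \<in># \<pi> then g X else 0)" for g X
    unfolding count_sum by (simp add: count_replicate_mset)
  show "\<forall>\<mu>\<in>choices r \<pi>. (\<Sum>S\<in>set_mset \<pi>. replicate_mset (restrict (count \<mu>) (set_mset \<pi>) S) S) = \<mu>"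
  proof
    fix \<mu> assume "\<mu> \<in> choices r \<pi>"
    then have "count \<mu> X = 0" if "X \<notin># \<pi>" for X
      using that unfolding choices_def by (auto simp: not_in_iff[symmetric] dest: mset_subset_eqD)
    then show "(\<Sum>S\<in>set_mset \<pi>. replicate_mset (restrict (count \<mu>) (set_mset \<pi>) S) S) = \<mu>"
      by (auto simp: multiset_eq_iff count_witness)
  qed
  show "\<forall>g\<in>choice_funs r \<pi>. restrict (count (\<Sum>S\<in>set_mset \<pi>. replicate_mset (g S) S)) (set_mset \<pi>) = g"
    unfolding choice_funs_def by (auto simp: count_witness fun_eq_iff PiE_iff extensional_def)
  show "(\<lambda>\<mu>. restrict (count \<mu>) (set_mset \<pi>)) ` choices r \<pi> \<subseteq> choice_funs r \<pi>"
    unfolding choices_def choice_funs_def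
    by (auto simp: size_as_sum_count mset_subset_eq_count)
  show "(\<lambda>g. \<Sum>S\<in>set_mset \<pi>. replicate_mset (g S) S) ` choice_funs r \<pi> \<subseteq> choices r \<pi>"
  proof
    fix \<mu> assume "\<mu> \<in> (\<lambda>g. \<Sum>S\<in>set_mset \<pi>. replicate_mset (g S) S) ` choice_funs r \<pi>"
    then obtain g where g: "g \<in> choice_funs r \<pi>" and \<mu>: "\<mu> = (\<Sum>S\<in>set_mset \<pi>. replicate_mset (g S) S)"
      by blast
    have sub: "\<mu> \<subseteq># \<pi>" using g unfolding subseteq_mset_def \<mu> count_witness choice_funs_def by auto
    then show "\<mu> \<in> choices r \<pi>"
      using g unfolding choices_def choice_funs_def size_as_sum_count[OF sub] \<mu> count_witness by simp
  qed
qed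

lemma sum_extend_choice_funs:
  assumes \<pi>: "\<pi> \<in> msp (rep_mset r m)"
  shows "(\<Sum>\<mu>\<in>choices r \<pi>. weight r z (extend (Suc m) r \<pi> \<mu>)) = (\<Sum>g\<in>choice_funs r \<pi>. split_weight r z \<pi> g)"
proof -
  have "split_weight r z \<pi> (count \<mu>) = split_weight r z \<pi> (restrict (count \<mu>) (set_mset \<pi>))" for \<mu>
    unfolding split_weight_def by (simp cong: prod.cong sum.cong)
  then show ?thesis
    using sum.reindex_bij_betw[OF bij_choices_choice_funs, of "split_weight r z \<pi>"]
    by (simp add: weight_extend[OF \<pi>])
qed

definition blocks :: "nat set multiset \<Rightarrow> nat \<Rightarrow> nat set set" where
  "blocks \<pi> i = {S \<in> set_mset \<pi>. count \<pi> S = i}"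

lemma finite_blocks: "finite (blocks \<pi> i)" unfolding blocks_def by simp

lemma card_blocks: "card (blocks \<pi> i) = a_cnt i \<pi>" unfolding blocks_def a_cnt_def ..

definition nonzero_values :: "('a \<Rightarrow> nat) \<Rightarrow> 'a set \<Rightarrow> nat multiset" where
  "nonzero_values g D = filter_mset (\<lambda>j. j \<noteq> 0) (image_mset g (mset_set D))"

lemma nonzero_values_cong:
  "finite D \<Longrightarrow> (\<And>x. x \<in> D \<Longrightarrow> g x = g' x) \<Longrightarrow> nonzero_values g D = nonzero_values g' D"
  unfolding nonzero_values_def by (intro arg_cong[where f="filter_mset _"] image_mset_cong) simp

lemma nonzero_values_insert:
  "finite D \<Longrightarrow> x \<notin> D \<Longrightarrow>
    nonzero_values g (insert x D) = (if g x = 0 then {#} else {#g x#}) + nonzero_values g D"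
  unfolding nonzero_values_def by simp

lemma nonzero_values_mem: "finite D \<Longrightarrow> x \<in> D \<Longrightarrow> g x \<noteq> 0 \<Longrightarrow> g x \<in># nonzero_values g D"
  unfolding nonzero_values_def by simp

lemma sum_nonzero_values:
  assumes "finite D" shows "sum_mset (nonzero_values g D) = (\<Sum>x\<in>D. g x)"
proof -
  have "sum_mset (filter_mset (\<lambda>j. j \<noteq> 0) M) = sum_mset M" for M :: "nat multiset"
    by (induction M) auto
  then show ?thesis using assms unfolding nonzero_values_def by (simp add: sum_unfold_sum_mset)
qed

text \<open>If g takes values in {0..i} on D, the product of z_(i - g x) z_(g x) over D depends only on
  |D| and the multiset of nonzero values: this is how the monomial coefficient of P[T] arises.\<close>
lemma prod_split_values:
  fixes z :: "nat \<Rightarrow> real"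
  assumes D: "finite D" and g: "\<And>x. x \<in> D \<Longrightarrow> g x \<le> i" and i: "i \<ge> 1"
  shows "(\<Prod>x\<in>D. (z(0:=1)) (i - g x) * (z(0:=1)) (g x)) =
    z i ^ (card D - size (nonzero_values g D)) *
    (\<Prod>j\<in>{1..i}. ((z(0:=1)) j * (z(0:=1)) (i - j)) ^ count (nonzero_values g D) j)"
proof -
  let ?zz = "z(0:=1)" and ?N = "nonzero_values g D"
  have count_N: "count ?N j = card {x \<in> D. g x = j}" if "j \<noteq> 0" for j
    using that unfolding nonzero_values_def by (simp add: count_image_mset_eq_card_vimage[OF D])
  have card_zero: "card {x \<in> D. g x = 0} = card D - size ?N"
  proof -
    have "size (image_mset g (mset_set D)) = size ?N + count (image_mset g (mset_set D)) 0"
      unfolding nonzero_values_def count_conv_size_mset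
      by (metis (mono_tags, lifting) filter_mset_cong multiset_partition size_union)
    then show ?thesis using D by (simp add: count_image_mset_eq_card_vimage)
  qed
  have "(\<Prod>x\<in>D. ?zz (i - g x) * ?zz (g x)) = (\<Prod>j\<in>insert 0 {1..i}. (?zz (i - j) * ?zz j) ^ card {x \<in> D. g x = j})"
    by (rule prod_group_power[OF D]) (use g in auto)
  also have "\<dots> = z i ^ card {x \<in> D. g x = 0} * (\<Prod>j\<in>{1..i}. (?zz (i - j) * ?zz j) ^ card {x \<in> D. g x = j})"
    using i by (simp add: prod.insert)
  also have "\<dots> = z i ^ (card D - size ?N) * (\<Prod>j\<in>{1..i}. (?zz j * ?zz (i - j)) ^ count ?N j)"
    unfolding card_zero by (intro arg_cong2[where f="(*)"] prod.cong refl) (simp_all add: count_N mult.commute)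
  finally show ?thesis .
qed

text \<open>The scenario of a multiplicity function g: c0 is the number of new singleton blocks,
  lambda_i the multiset of nonzero values of g on the blocks of multiplicity i.\<close>
definition scenario_of :: "nat \<Rightarrow> nat set multiset \<Rightarrow> (nat set \<Rightarrow> nat) \<Rightarrow> nat \<times> (nat \<Rightarrow> nat multiset)" where
  "scenario_of r \<pi> g = (r - (\<Sum>S\<in>set_mset \<pi>. g S),
     \<lambda>i. if i \<in> {1..r} then nonzero_values g (blocks \<pi> i) else {#})"

text \<open>In a partition of {1^r,...,m^r} every multiplicity lies in {1..r}, so sums and products
  over the distinct blocks can be grouped by multiplicity.\<close>
lemma sum_by_blocks:
  "\<pi> \<in> msp (rep_mset r m) \<Longrightarrow> (\<Sum>S\<in>set_mset \<pi>. f S) = (\<Sum>i\<in>{1..r}. \<Sum>S\<in>blocks \<pi> i. f S)"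
  unfolding blocks_def by (rule sum.group[symmetric]) (auto dest: msp_count_range)

lemma prod_by_blocks:
  "\<pi> \<in> msp (rep_mset r m) \<Longrightarrow> (\<Prod>S\<in>set_mset \<pi>. f S) = (\<Prod>i\<in>{1..r}. \<Prod>S\<in>blocks \<pi> i. f S)"
  unfolding blocks_def by (rule prod.group[symmetric]) (auto dest: msp_count_range)

lemma scenario_of_in_scenarios:
  assumes \<pi>: "\<pi> \<in> msp (rep_mset r m)" and g: "g \<in> choice_funs r \<pi>"
  shows "scenario_of r \<pi> g \<in> scenarios r"
proof -
  have g_le: "g S \<le> i" if "S \<in> blocks \<pi> i" for S i using g that unfolding choice_funs_def blocks_def by auto
  have "set_mset (nonzero_values g (blocks \<pi> i)) \<subseteq> {1..i}" for i
    using g_le unfolding nonzero_values_def by (force simp: finite_blocks)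
  moreover have "(\<Sum>i=1..r. sum_mset (nonzero_values g (blocks \<pi> i))) = (\<Sum>S\<in>set_mset \<pi>. g S)"
    unfolding sum_by_blocks[OF \<pi>] by (simp add: sum_nonzero_values finite_blocks)
  moreover have "(\<Sum>S\<in>set_mset \<pi>. g S) \<le> r" using g unfolding choice_funs_def by auto
  ultimately show ?thesis unfolding scenarios_def scenario_of_def by auto
qed

text \<open>The weight of an extension expressed through its scenario T = (c, l): the coefficient
  monomial of P[T] times z^a(pi) with the exponent of z_i lowered by l(lambda_i).\<close>
definition scenario_weight :: "nat \<Rightarrow> (nat \<Rightarrow> real) \<Rightarrow> nat set multiset \<Rightarrow> nat \<times> (nat \<Rightarrow> nat multiset) \<Rightarrow> real" where
  "scenario_weight r z \<pi> T = (z(0:=1)) (fst T) * (\<Prod>i\<in>{1..r}. z i ^ (a_cnt i \<pi> - size (snd T i)) *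
      (\<Prod>j\<in>{1..i}. ((z(0:=1)) j * (z(0:=1)) (i - j)) ^ count (snd T i) j))"

lemma split_weight_scenario:
  assumes \<pi>: "\<pi> \<in> msp (rep_mset r m)" and g: "g \<in> choice_funs r \<pi>"
  shows "split_weight r z \<pi> g = scenario_weight r z \<pi> (scenario_of r \<pi> g)"
proof -
  let ?zz = "z(0:=1)" and ?l = "snd (scenario_of r \<pi> g)"
  have "(\<Prod>S\<in>set_mset \<pi>. ?zz (count \<pi> S - g S) * ?zz (g S)) =
        (\<Prod>i\<in>{1..r}. z i ^ (a_cnt i \<pi> - size (?l i)) * (\<Prod>j\<in>{1..i}. (?zz j * ?zz (i - j)) ^ count (?l i) j))"
    unfolding prod_by_blocks[OF \<pi>]
  proof (intro prod.cong refl)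
    fix i assume i: "i \<in> {1..r}"
    have "g S \<le> i" if "S \<in> blocks \<pi> i" for S using g that unfolding choice_funs_def blocks_def by auto
    moreover have "?l i = nonzero_values g (blocks \<pi> i)" using i by (simp add: scenario_of_def)
    moreover have "(\<Prod>S\<in>blocks \<pi> i. ?zz (count \<pi> S - g S) * ?zz (g S)) =
        (\<Prod>S\<in>blocks \<pi> i. ?zz (i - g S) * ?zz (g S))"
      by (rule prod.cong) (auto simp: blocks_def)
    ultimately show "(\<Prod>S\<in>blocks \<pi> i. ?zz (count \<pi> S - g S) * ?zz (g S)) =
        z i ^ (a_cnt i \<pi> - size (?l i)) * (\<Prod>j\<in>{1..i}. (?zz j * ?zz (i - j)) ^ count (?l i) j)"
      using i prod_split_values[OF finite_blocks] by (simp add: card_blocks)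
  qed
  then show ?thesis
    unfolding split_weight_def scenario_weight_def by (simp add: scenario_of_def)
qed

section \<open>Counting functions with a prescribed multiset of nonzero values\<close>

definition assignments :: "'a set \<Rightarrow> nat multiset \<Rightarrow> ('a \<Rightarrow> nat) set" where
  "assignments D L = {h \<in> PiE D (\<lambda>_. insert 0 (set_mset L)). nonzero_values h D = L}"

lemma finite_assignments: "finite D \<Longrightarrow> finite (assignments D L)"
  unfolding assignments_def
  by (rule finite_subset[of _ "PiE D (\<lambda>_. insert 0 (set_mset L))"]) (auto intro: finite_PiE)

lemma assignments_insert_fibre:
  assumes D: "finite D" "x \<notin> D" and v: "v \<in> insert 0 (set_mset L)"
  shows "{h \<in> assignments (insert x D) L. h x = v} =
         (\<lambda>h. h(x := v)) ` assignments D (if v = 0 then L else L - {#v#})"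
    (is "?A = ?f ` ?B")
proof
  let ?L' = "if v = 0 then L else L - {#v#}"
  have N_upd: "nonzero_values (h(x := v)) (insert x D) = (if v = 0 then {#} else {#v#}) + nonzero_values h D" for h
  proof -
    have "nonzero_values (h(x := v)) D = nonzero_values h D"
      by (rule nonzero_values_cong[OF D(1)]) (use D(2) in auto)
    then show ?thesis using nonzero_values_insert[OF D, of "h(x := v)"] by simp
  qed
  show "?A \<subseteq> ?f ` ?B"
  proof
    fix h assume "h \<in> ?A"
    then have hP: "h \<in> PiE (insert x D) (\<lambda>_. insert 0 (set_mset L))" and hx: "h x = v"
      and hN: "nonzero_values h (insert x D) = L"
      unfolding assignments_def by auto
    have h_eq: "h = (restrict h D)(x := v)"
      using hP hx D by (auto simp: fun_eq_iff PiE_iff extensional_def)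
    have "L = (if v = 0 then {#} else {#v#}) + nonzero_values (restrict h D) D"
      using hN N_upd[of "restrict h D"] unfolding h_eq[symmetric] by simp
    then have N: "nonzero_values (restrict h D) D = ?L'" by simp
    have "restrict h D \<in> PiE D (\<lambda>_. insert 0 (set_mset ?L'))"
      using nonzero_values_mem[OF D(1), of _ "restrict h D"] unfolding N by (force simp: PiE_iff)
    with N have "restrict h D \<in> ?B" unfolding assignments_def by blast
    with h_eq show "h \<in> ?f ` ?B" by blast
  qed
  show "?f ` ?B \<subseteq> ?A"
  proof
    fix h' assume "h' \<in> ?f ` ?B"
    then obtain h where hP: "h \<in> PiE D (\<lambda>_. insert 0 (set_mset ?L'))"
      and hN: "nonzero_values h D = ?L'" and h': "h' = h(x := v)"
      unfolding assignments_def by blast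
    have "h' \<in> PiE (insert x D) (\<lambda>_. insert 0 (set_mset L))"
      using hP v D unfolding h' by (auto simp: PiE_iff split: if_splits dest: in_diffD)
    moreover have "nonzero_values h' (insert x D) = L"
      unfolding h' N_upd hN using v by auto
    ultimately show "h' \<in> ?A" unfolding assignments_def h' by auto
  qed
qed

lemma card_assignments_insert:
  assumes D: "finite D" "x \<notin> D" and L: "0 \<notin># L"
  shows "card (assignments (insert x D) L) =
         card (assignments D L) + (\<Sum>v\<in>set_mset L. card (assignments D (L - {#v#})))"
proof -
  let ?V = "insert 0 (set_mset L)"
  have card_fibre: "card {h \<in> assignments (insert x D) L. h x = v} =
      card (assignments D (if v = 0 then L else L - {#v#}))" if v: "v \<in> ?V" for v
  proof -
    have "inj_on (\<lambda>h. h(x := v)) (PiE D (\<lambda>_. insert 0 (set_mset (if v = 0 then L else L - {#v#}))))"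
      by (rule inj_onI) (metis D(2) PiE_E fun_upd_idem_iff fun_upd_upd)
    then have "inj_on (\<lambda>h. h(x := v)) (assignments D (if v = 0 then L else L - {#v#}))"
      by (rule inj_on_subset) (auto simp: assignments_def)
    then show ?thesis unfolding assignments_insert_fibre[OF D v] by (rule card_image)
  qed
  have "card (assignments (insert x D) L) = (\<Sum>v\<in>?V. card {h \<in> assignments (insert x D) L. h x = v})"
  proof -
    have "(\<lambda>h. h x) ` assignments (insert x D) L \<subseteq> ?V" unfolding assignments_def by auto
    from sum.group[OF finite_assignments _ this, of "\<lambda>_. 1::nat"] show ?thesis using D by simp
  qed
  also have "\<dots> = (\<Sum>v\<in>?V. card (assignments D (if v = 0 then L else L - {#v#})))"
    by (intro sum.cong refl card_fibre)
  also have "\<dots> = card (assignments D L) + (\<Sum>v\<in>set_mset L. card (assignments D (L - {#v#})))"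
    using L by (simp add: sum.insert) (intro sum.cong, auto)
  finally show ?thesis .
qed

lemma prod_fact_count_remove:
  assumes "finite J" "v \<in> J" "v \<in># L"
  shows "(\<Prod>j\<in>J. fact (count L j) :: real) = real (count L v) * (\<Prod>j\<in>J. fact (count (L - {#v#}) j))"
proof -
  have "(\<Prod>j\<in>J-{v}. fact (count (L - {#v#}) j) :: real) = (\<Prod>j\<in>J-{v}. fact (count L j))"
    by (intro prod.cong) auto
  then have "(\<Prod>j\<in>J. fact (count (L - {#v#}) j) :: real) = fact (count L v - 1) * (\<Prod>j\<in>J-{v}. fact (count L j))"
    using assms by (simp add: prod.remove)
  moreover have "(\<Prod>j\<in>J. fact (count L j) :: real) = fact (count L v) * (\<Prod>j\<in>J-{v}. fact (count L j))"
    using assms by (simp add: prod.remove)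
  moreover have "(fact (count L v) :: real) = real (count L v) * fact (count L v - 1)"
    using assms(3) by (simp add: fact_reduce)
  ultimately show ?thesis by simp
qed

lemma card_assignments_empty: "real (card (assignments ({} :: 'a set) L)) = falling 0 (size L)"
proof (cases "L = {#}")
  case True
  then have "assignments ({} :: 'a set) L = {\<lambda>_. undefined}"
    unfolding assignments_def nonzero_values_def by auto
  then show ?thesis using True by (simp add: falling_def)
next
  case False
  then have "assignments ({} :: 'a set) L = {}"
    unfolding assignments_def nonzero_values_def by auto
  moreover have "falling 0 (size L) = 0"
    using False by (cases "size L") (auto simp: falling_def)
  ultimately show ?thesis by simp
qed

lemma card_assignments:
  assumes "finite D" "finite J" "set_mset L \<subseteq> J" "0 \<notin># L"
  shows "real (card (assignments D L)) * (\<Prod>j\<in>J. fact (count L j)) = falling (card D) (size L)"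
  using assms(1,3,4)
proof (induction D arbitrary: L rule: finite_induct)
  case empty
  then show ?case
    using card_assignments_empty[of L] by (cases "L = {#}") (auto simp: falling_def nonempty_has_size)
next
  case (insert x D)
  define F where "F M = (\<Prod>j\<in>J. fact (count M j) :: real)" for M
  have remove: "real (card (assignments D (L - {#v#}))) * F L = real (count L v) * falling (card D) (size L - 1)"
    if v: "v \<in># L" for v
  proof -
    have "real (card (assignments D (L - {#v#}))) * F (L - {#v#}) = falling (card D) (size (L - {#v#}))"
      unfolding F_def by (rule insert.IH) (use insert.prems in \<open>auto dest: in_diffD\<close>)
    moreover have "F L = real (count L v) * F (L - {#v#})"
      unfolding F_def using prod_fact_count_remove[OF assms(2) _ v] v insert.prems by auto
    ultimately show ?thesis using v by (simp add: size_Diff_singleton)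
  qed
  have "real (card (assignments (insert x D) L)) * F L =
      real (card (assignments D L)) * F L + (\<Sum>v\<in>set_mset L. real (card (assignments D (L - {#v#}))) * F L)"
    unfolding card_assignments_insert[OF insert.hyps insert.prems(2)] by (simp add: algebra_simps sum_distrib_left)
  also have "\<dots> = falling (card D) (size L) + real (size L) * falling (card D) (size L - 1)"
    using insert.IH[OF insert.prems] remove
    by (simp add: F_def sum_distrib_right[symmetric] size_multiset_overloaded_eq)
  also have "\<dots> = falling (card (insert x D)) (size L)"
    using insert.hyps falling_Suc_Suc by (cases "size L") (simp_all add: falling_def)
  finally show ?case unfolding F_def .
qed

lemma bij_betw_restrict_classes:
  assumes idx: "idx ` A \<subseteq> I" and F: "\<And>i. i \<in> I \<Longrightarrow> F i \<subseteq> extensional {x \<in> A. idx x = i}"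
  shows "bij_betw (\<lambda>g. \<lambda>i\<in>I. restrict g {x \<in> A. idx x = i})
           {g \<in> extensional A. \<forall>i\<in>I. restrict g {x \<in> A. idx x = i} \<in> F i} (PiE I F)"
proof (rule bij_betw_byWitness[where f' = "\<lambda>h. \<lambda>x\<in>A. h (idx x) x"])
  show "\<forall>g\<in>{g \<in> extensional A. \<forall>i\<in>I. restrict g {x \<in> A. idx x = i} \<in> F i}.
          (\<lambda>x\<in>A. (\<lambda>i\<in>I. restrict g {x \<in> A. idx x = i}) (idx x) x) = g"
    using idx by (auto simp: fun_eq_iff extensional_def)
  show "\<forall>h\<in>PiE I F. (\<lambda>i\<in>I. restrict (\<lambda>x\<in>A. h (idx x) x) {x \<in> A. idx x = i}) = h"
  proof
    fix h assume h: "h \<in> PiE I F"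
    have "restrict (\<lambda>x\<in>A. h (idx x) x) {x \<in> A. idx x = i} = h i" if "i \<in> I" for i
      using h F[OF that] that by (force simp: fun_eq_iff extensional_def)
    then show "(\<lambda>i\<in>I. restrict (\<lambda>x\<in>A. h (idx x) x) {x \<in> A. idx x = i}) = h"
      using h by (auto simp: fun_eq_iff PiE_iff extensional_def)
  qed
  show "(\<lambda>g. \<lambda>i\<in>I. restrict g {x \<in> A. idx x = i}) `
      {g \<in> extensional A. \<forall>i\<in>I. restrict g {x \<in> A. idx x = i} \<in> F i} \<subseteq> PiE I F"
    by auto
  show "(\<lambda>h. \<lambda>x\<in>A. h (idx x) x) ` PiE I F \<subseteq> {g \<in> extensional A. \<forall>i\<in>I. restrict g {x \<in> A. idx x = i} \<in> F i}"
  proof (rule image_subsetI, intro CollectI conjI ballI)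
    fix h i assume h: "h \<in> PiE I F" and i: "i \<in> I"
    have "restrict (\<lambda>x\<in>A. h (idx x) x) {x \<in> A. idx x = i} = h i"
      using h F[OF i] i by (force simp: fun_eq_iff extensional_def)
    then show "restrict (\<lambda>x\<in>A. h (idx x) x) {x \<in> A. idx x = i} \<in> F i" using h i by auto
  qed simp
qed

lemma scenario_fibre_eq:
  assumes \<pi>: "\<pi> \<in> msp (rep_mset r m)" and T: "(c, l) \<in> scenarios r"
  shows "{g \<in> choice_funs r \<pi>. scenario_of r \<pi> g = (c, l)} =
         {g \<in> extensional (set_mset \<pi>). \<forall>i\<in>{1..r}. restrict g (blocks \<pi> i) \<in> assignments (blocks \<pi> i) (l i)}"
proof -
  have l_range: "set_mset (l i) \<subseteq> {1..i}" and l_out: "i \<notin> {1..r} \<Longrightarrow> l i = {#}"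
    and l_sum: "c + (\<Sum>i=1..r. sum_mset (l i)) = r" for i
    using T unfolding scenarios_def by auto
  have in_blocks: "S \<in> blocks \<pi> (count \<pi> S)" "count \<pi> S \<in> {1..r}" if "S \<in># \<pi>" for S
    using that msp_count_range[OF \<pi>] unfolding blocks_def by auto
  have assignment_iff: "restrict g (blocks \<pi> i) \<in> assignments (blocks \<pi> i) (l i) \<longleftrightarrow>
      (\<forall>S\<in>blocks \<pi> i. g S \<in> insert 0 (set_mset (l i))) \<and> nonzero_values g (blocks \<pi> i) = l i" for g i
    unfolding assignments_def by (simp add: nonzero_values_cong[of _ "restrict g _" g] finite_blocks Pi_iff)
  show ?thesis
  proof (intro equalityI subsetI)
    fix g assume "g \<in> {g \<in> choice_funs r \<pi>. scenario_of r \<pi> g = (c, l)}"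
    then have g: "g \<in> choice_funs r \<pi>" and N: "\<And>i. i \<in> {1..r} \<Longrightarrow> nonzero_values g (blocks \<pi> i) = l i"
      unfolding scenario_of_def by (auto dest: fun_cong)
    have "g S \<in> insert 0 (set_mset (l i))" if "i \<in> {1..r}" "S \<in> blocks \<pi> i" for i S
    proof -
      have "g S = 0 \<or> g S \<in># nonzero_values g (blocks \<pi> i)"
        using that(2) nonzero_values_mem[OF finite_blocks] by blast
      then show ?thesis using N[OF that(1)] by auto
    qed
    then show "g \<in> {g \<in> extensional (set_mset \<pi>). \<forall>i\<in>{1..r}. restrict g (blocks \<pi> i) \<in> assignments (blocks \<pi> i) (l i)}"
      using g N assignment_iff unfolding choice_funs_def by (auto simp: PiE_iff)
  next
    fix g assume "g \<in> {g \<in> extensional (set_mset \<pi>). \<forall>i\<in>{1..r}. restrict g (blocks \<pi> i) \<in> assignments (blocks \<pi> i) (l i)}"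
    then have ext: "g \<in> extensional (set_mset \<pi>)"
      and vals: "\<And>i S. i \<in> {1..r} \<Longrightarrow> S \<in> blocks \<pi> i \<Longrightarrow> g S \<in> insert 0 (set_mset (l i))"
      and N: "\<And>i. i \<in> {1..r} \<Longrightarrow> nonzero_values g (blocks \<pi> i) = l i"
      using assignment_iff by auto
    have "(\<Sum>S\<in>set_mset \<pi>. g S) = (\<Sum>i=1..r. sum_mset (l i))"
      unfolding sum_by_blocks[OF \<pi>] by (intro sum.cong refl) (simp add: N[symmetric] sum_nonzero_values finite_blocks)
    moreover have "g S \<in> {0..count \<pi> S}" if "S \<in># \<pi>" for S
      using vals[OF in_blocks(2,1)[OF that]] l_range[of "count \<pi> S"] by auto
    ultimately have "g \<in> choice_funs r \<pi>"
      unfolding choice_funs_def using ext l_sum by (auto simp: PiE_iff)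
    moreover have "scenario_of r \<pi> g = (c, l)"
      unfolding scenario_of_def using \<open>(\<Sum>S\<in>set_mset \<pi>. g S) = _\<close> l_sum N l_out by (auto simp: fun_eq_iff)
    ultimately show "g \<in> {g \<in> choice_funs r \<pi>. scenario_of r \<pi> g = (c, l)}" by blast
  qed
qed

lemma card_scenario_fibre:
  assumes \<pi>: "\<pi> \<in> msp (rep_mset r m)" and T: "(c, l) \<in> scenarios r"
  shows "real (card {g \<in> choice_funs r \<pi>. scenario_of r \<pi> g = (c, l)}) * (\<Prod>i\<in>{1..r}. \<Prod>j\<in>{1..i}. fact (count (l i) j))
     = (\<Prod>i\<in>{1..r}. falling (a_cnt i \<pi>) (size (l i)))"
proof -
  have l_range: "set_mset (l i) \<subseteq> {1..i}" for i using T unfolding scenarios_def by auto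
  have "bij_betw (\<lambda>g. \<lambda>i\<in>{1..r}. restrict g (blocks \<pi> i)) {g \<in> choice_funs r \<pi>. scenario_of r \<pi> g = (c, l)}
      (PiE {1..r} (\<lambda>i. assignments (blocks \<pi> i) (l i)))"
    unfolding scenario_fibre_eq[OF \<pi> T] blocks_def
    by (rule bij_betw_restrict_classes) (auto dest: msp_count_range[OF \<pi>] simp: assignments_def PiE_iff)
  then have "card {g \<in> choice_funs r \<pi>. scenario_of r \<pi> g = (c, l)} = (\<Prod>i\<in>{1..r}. card (assignments (blocks \<pi> i) (l i)))"
    by (simp add: bij_betw_same_card card_PiE)
  moreover have "real (card (assignments (blocks \<pi> i) (l i))) * (\<Prod>j\<in>{1..i}. fact (count (l i) j)) =
      falling (a_cnt i \<pi>) (size (l i))" for i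
    using card_assignments[OF finite_blocks finite_atLeastAtMost l_range] l_range[of i]
    by (force simp: card_blocks)
  ultimately show ?thesis by (simp add: prod.distrib[symmetric])
qed

text \<open>There are finitely many scenarios: c0 \<le> r, and each lambda_i has at most r parts from {1..r}.\<close>
lemma finite_scenarios: "finite (scenarios r)"
proof -
  define Ms where "Ms = {M :: nat multiset. set_mset M \<subseteq> {1..r} \<and> size M \<le> r}"
  have "finite Ms" unfolding Ms_def by (rule finite_msets_bounded) simp
  then have fin: "finite {l. \<forall>i. (i \<in> {1..r} \<longrightarrow> l i \<in> Ms) \<and> (i \<notin> {1..r} \<longrightarrow> l i = {#})}"
    using finite_set_of_finite_funs[OF finite_atLeastAtMost, of Ms 1 r "{#}"] by simp
  have "size (l i) \<le> r \<and> set_mset (l i) \<subseteq> {1..r}" if "(c, l) \<in> scenarios r" "i \<in> {1..r}" for c l i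
  proof -
    have range: "set_mset (l i) \<subseteq> {1..i}" and sum: "c + (\<Sum>i=1..r. sum_mset (l i)) = r"
      using that(1) unfolding scenarios_def by auto
    have "size (l i) \<le> sum_mset (l i)"
      using range by (intro size_le_sum_mset) force
    also have "\<dots> \<le> (\<Sum>i=1..r. sum_mset (l i))" by (rule member_le_sum) (use that(2) in auto)
    finally show ?thesis using sum range that(2) by auto
  qed
  then have "scenarios r \<subseteq> {0..r} \<times> {l. \<forall>i. (i \<in> {1..r} \<longrightarrow> l i \<in> Ms) \<and> (i \<notin> {1..r} \<longrightarrow> l i = {#})}"
    unfolding Ms_def by (auto simp: scenarios_def)
  then show ?thesis using fin by (rule finite_subset[OF _ finite_SigmaI[OF finite_atLeastAtMost]])
qed

definition scenario_coeff :: "nat \<Rightarrow> (nat \<Rightarrow> real) \<Rightarrow> nat \<times> (nat \<Rightarrow> nat multiset) \<Rightarrow> real" where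
  "scenario_coeff r z T = (z(0:=1)) (fst T) * (\<Prod>i\<in>{1..r}. \<Prod>j\<in>{1..i}.
        ((z(0:=1)) j * (z(0:=1)) (i - j)) ^ count (snd T i) j / fact (count (snd T i) j))"

lemma PT_eq: "PT r T f z = scenario_coeff r z T * Dall r (snd T) f z"
  unfolding PT_def scenario_coeff_def Let_def ..

lemma scenario_contribution:
  assumes \<pi>: "\<pi> \<in> msp (rep_mset r m)" and T: "T \<in> scenarios r"
  shows "real (card {g \<in> choice_funs r \<pi>. scenario_of r \<pi> g = T}) * scenario_weight r z \<pi> T =
    scenario_coeff r z T *
    ((\<Prod>i\<in>{1..r}. falling (a_cnt i \<pi>) (size (snd T i))) * (\<Prod>k\<in>{1..r}. z k ^ (a_cnt k \<pi> - size (snd T k))))"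
proof -
  obtain c l where Tcl: "T = (c, l)" by (cases T)
  define K where "K = real (card {g \<in> choice_funs r \<pi>. scenario_of r \<pi> g = T})"
  define F where "F = (\<Prod>i\<in>{1..r}. \<Prod>j\<in>{1..i}. fact (count (l i) j) :: real)"
  define Q where "Q = (\<Prod>i\<in>{1..r}. \<Prod>j\<in>{1..i}. ((z(0:=1)) j * (z(0:=1)) (i - j)) ^ count (l i) j)"
  define Z where "Z = (\<Prod>i\<in>{1..r}. z i ^ (a_cnt i \<pi> - size (l i)))"
  have "F \<noteq> 0" unfolding F_def by (simp add: prod_zero_iff)
  have weight: "scenario_weight r z \<pi> T = (z(0:=1)) c * Z * Q"
    unfolding scenario_weight_def Z_def Q_def Tcl by (simp add: prod.distrib mult_ac)
  have coeff: "scenario_coeff r z T = (z(0:=1)) c * Q / F"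
    unfolding scenario_coeff_def Q_def F_def Tcl by (simp add: prod_dividef)
  have "(\<Prod>i\<in>{1..r}. falling (a_cnt i \<pi>) (size (snd T i))) = K * F"
    unfolding K_def F_def Tcl snd_conv by (rule card_scenario_fibre[OF \<pi>, symmetric]) (use T Tcl in simp)
  moreover have "(\<Prod>k\<in>{1..r}. z k ^ (a_cnt k \<pi> - size (snd T k))) = Z"
    unfolding Z_def Tcl by simp
  ultimately show ?thesis
    unfolding K_def[symmetric] weight coeff using \<open>F \<noteq> 0\<close> by simp
qed

lemma sum_choice_funs_by_scenario:
  assumes \<pi>: "\<pi> \<in> msp (rep_mset r m)"
  shows "(\<Sum>g\<in>choice_funs r \<pi>. split_weight r z \<pi> g) = (\<Sum>T\<in>scenarios r. scenario_coeff r z T *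
     ((\<Prod>i\<in>{1..r}. falling (a_cnt i \<pi>) (size (snd T i))) * (\<Prod>k\<in>{1..r}. z k ^ (a_cnt k \<pi> - size (snd T k)))))"
proof -
  have "(\<Sum>g\<in>choice_funs r \<pi>. split_weight r z \<pi> g) =
      (\<Sum>T\<in>scenarios r. \<Sum>g\<in>{g \<in> choice_funs r \<pi>. scenario_of r \<pi> g = T}. split_weight r z \<pi> g)"
    by (rule sum.group[symmetric, OF finite_choice_funs finite_scenarios]) (use scenario_of_in_scenarios[OF \<pi>] in auto)
  also have "\<dots> = (\<Sum>T\<in>scenarios r. real (card {g \<in> choice_funs r \<pi>. scenario_of r \<pi> g = T}) * scenario_weight r z \<pi> T)"
    by (intro sum.cong refl) (simp add: split_weight_scenario[OF \<pi>])
  finally show ?thesis by (simp add: scenario_contribution[OF \<pi>] cong: sum.cong)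
qed

theorem mainTheorem2:
  fixes r n :: nat
  assumes "r \<ge> 1" and "n \<ge> 1"
  shows "(\<forall>z. P r n z = Dop r (P r (n - 1)) z)
         \<and> real (card (msp (rep_mset r n))) = P r n (\<lambda>_. 1)"
proof
  obtain m where n: "n = Suc m" using assms(2) by (cases n) auto
  show "\<forall>z. P r n z = Dop r (P r (n - 1)) z"
  proof
    fix z :: "nat \<Rightarrow> real"
    have "P r n z = (\<Sum>\<pi>\<in>msp (rep_mset r m). \<Sum>\<mu>\<in>choices r \<pi>. weight r z (extend (Suc m) r \<pi> \<mu>))"
      unfolding P_weight n by (rule sum_msp_Suc)
    also have "\<dots> = (\<Sum>\<pi>\<in>msp (rep_mset r m). \<Sum>T\<in>scenarios r. scenario_coeff r z T *
        ((\<Prod>i\<in>{1..r}. falling (a_cnt i \<pi>) (size (snd T i))) * (\<Prod>k\<in>{1..r}. z k ^ (a_cnt k \<pi> - size (snd T k)))))"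
      by (intro sum.cong refl) (simp add: sum_extend_choice_funs sum_choice_funs_by_scenario)
    also have "\<dots> = (\<Sum>T\<in>scenarios r. scenario_coeff r z T * Dall r (snd T) (P r m) z)"
      unfolding Dall_P sum_distrib_left by (rule sum.swap)
    also have "\<dots> = Dop r (P r (n - 1)) z"
      unfolding Dop_def PT_eq n by simp
    finally show "P r n z = Dop r (P r (n - 1)) z" .
  qed
  show "real (card (msp (rep_mset r n))) = P r n (\<lambda>_. 1)"
    unfolding P_def by simp
qed

end
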